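(* Backward proof search in $\mathsf{G}(\mathbf{KT}^+_D)$ always terminates: there is no infinite sequence of T-sequents $S_0,S_1,S_2,\dots$ such that, for every $i$, $S_{i+1}$ is a premise of some instance of a rule of $\mathsf{G}(\mathbf{KT}^+_D)$ whose conclusion is $S_i$.
   Context: Language: fix a finite nonempty set $\mathsf{Agt}$ of agents and a countable set $\mathsf{Prop}$ of propositional variables; $\mathsf{Grp}$ is the set of nonempty subsets of $\mathsf{Agt}$. Formulas: $\alpha::=p\mid\bot\mid\alpha\wedge\alpha\mid\alpha\vee\alpha\mid\alpha\rightarrow\alpha\mid\neg\alpha\mid D_G\alpha$ ($p\in\mathsf{Prop}$, $G\in\mathsf{Grp}$). Outmost-boxed formula: one of the form $D_G\gamma$. Calculus $\mathsf{G}(\mathbf{KT}^+_D)$: a T-sequent $\Sigma\mid\Gamma\Rightarrow\Delta$ consists of finite multisets $\Gamma,\Delta$ of formulas and a finite multiset $\Sigma$ of outmost-boxed formulas. Initial sequents: $\Sigma\mid\Gamma,p\Rightarrow p,\Delta$ ($p\in\mathsf{Prop}$) and $\Sigma\mid\bot,\Gamma\Rightarrow\Delta$. Propositional rules (with $\Sigma$ unchanged): $(R\wedge)$ from $\Sigma\mid\Gamma\Rightarrow\Delta,\alpha_1$ and $\Sigma\mid\Gamma\Rightarrow\Delta,\alpha_2$ infer $\Sigma\mid\Gamma\Rightarrow\Delta,\alpha_1\wedge\alpha_2$; $(L\wedge)$ from $\Sigma\mid\alpha_1,\alpha_2,\Gamma\Rightarrow\Delta$ infer $\Sigma\mid\alpha_1\wedge\alpha_2,\Gamma\Rightarrow\Delta$;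 $(R\vee)$ from $\Sigma\mid\Gamma\Rightarrow\Delta,\alpha_1,\alpha_2$ infer $\Sigma\mid\Gamma\Rightarrow\Delta,\alpha_1\vee\alpha_2$; $(L\vee)$ from $\Sigma\mid\alpha_1,\Gamma\Rightarrow\Delta$ and $\Sigma\mid\alpha_2,\Gamma\Rightarrow\Delta$ infer $\Sigma\mid\alpha_1\vee\alpha_2,\Gamma\Rightarrow\Delta$; $(R\rightarrow)$ from $\Sigma\mid\alpha_1,\Gamma\Rightarrow\Delta,\alpha_2$ infer $\Sigma\mid\Gamma\Rightarrow\Delta,\alpha_1\rightarrow\alpha_2$; $(L\rightarrow)$ from $\Sigma\mid\Gamma\Rightarrow\Delta,\alpha_1$ and $\Sigma\mid\alpha_2,\Gamma\Rightarrow\Delta$ infer $\Sigma\mid\alpha_1\rightarrow\alpha_2,\Gamma\Rightarrow\Delta$; $(R\neg)$ from $\Sigma\mid\alpha,\Gamma\Rightarrow\Delta$ infer $\Sigma\mid\Gamma\Rightarrow\Delta,\neg\alpha$; $(L\neg)$ from $\Sigma\mid\Gamma\Rightarrow\Delta,\alpha$ infer $\Sigma\mid\neg\alpha,\Gamma\Rightarrow\Delta$. Modal rules: $(D_K^+)$: from $\emptyset\mid\alpha_1,\dots,\alpha_n\Rightarrow\beta$ ($n\ge0$) infer $\Sigma,D_{G_1}\alpha_1,\dots,D_{G_n}\alpha_n\mid\Pi\Rightarrow D_G\beta,\Omega$, provided $G_i\subseteq G$ for all $i$, $\Sigma$ consists only of formulas $D_H\gamma$ with $H\not\subseteq G$,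 $\Pi$ only of propositional variables and $\bot$, and $\Omega$ only of propositional variables, $\bot$ and outmost-boxed formulas; $(D_T^+)$: from $D_G\alpha,\Sigma\mid\Gamma,\alpha\Rightarrow\Delta$ infer $\Sigma\mid\Gamma,D_G\alpha\Rightarrow\Delta$. *)

theory Defs
  imports Main "HOL-Library.Multiset" "HOL-Library.Countable"
begin

text \<open>Agents: the finite nonempty type 'ag (Agt = UNIV). Groups: nonempty sets of agents.
  Propositional variables: the countable type 'p.\<close>

datatype ('p, 'ag) fm =
    Atom 'p
  | Bot
  | Conj "('p, 'ag) fm" "('p, 'ag) fm"
  | Disj "('p, 'ag) fm" "('p, 'ag) fm"
  | Imp "('p, 'ag) fm" "('p, 'ag) fm"
  | Neg "('p, 'ag) fm"
  | Box "'ag set" "('p, 'ag) fm"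

fun wf_fm :: "('p, 'ag) fm \<Rightarrow> bool" where
  "wf_fm (Atom p) = True"
| "wf_fm Bot = True"
| "wf_fm (Conj a b) = (wf_fm a \<and> wf_fm b)"
| "wf_fm (Disj a b) = (wf_fm a \<and> wf_fm b)"
| "wf_fm (Imp a b) = (wf_fm a \<and> wf_fm b)"
| "wf_fm (Neg a) = wf_fm a"
| "wf_fm (Box G a) = (G \<noteq> {} \<and> wf_fm a)"

definition boxed :: "('p, 'ag) fm \<Rightarrow> bool" where
  "boxed f \<longleftrightarrow> (\<exists>G a. f = Box G a)"

definition atom_or_bot :: "('p, 'ag) fm \<Rightarrow> bool" where
  "atom_or_bot f \<longleftrightarrow> f = Bot \<or> (\<exists>p. f = Atom p)"

text \<open>A T-sequent \<open>\<Sigma> | \<Gamma> \<Rightarrow> \<Delta>\<close> is represented as a triple of multisets.\<close>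
type_synonym ('p, 'ag) tseq = "('p, 'ag) fm multiset \<times> ('p, 'ag) fm multiset \<times> ('p, 'ag) fm multiset"

definition is_tseq :: "('p, 'ag) tseq \<Rightarrow> bool" where
  "is_tseq S \<longleftrightarrow> (case S of (\<Sigma>, \<Gamma>, \<Delta>) \<Rightarrow>
      (\<forall>f\<in>#\<Sigma>. boxed f \<and> wf_fm f) \<and> (\<forall>f\<in>#\<Gamma>. wf_fm f) \<and> (\<forall>f\<in>#\<Delta>. wf_fm f))"

text \<open>\<open>prem S' S\<close>: S' is a premise of some rule instance of G(KT+_D) with conclusion S.
  (Initial sequents are zero-premise rules and contribute nothing.)\<close>
inductive prem :: "('p, 'ag) tseq \<Rightarrow> ('p, 'ag) tseq \<Rightarrow> bool" where
  R_conj1: "prem (\<Sigma>, \<Gamma>, add_mset a1 \<Delta>) (\<Sigma>, \<Gamma>, add_mset (Conj a1 a2) \<Delta>)"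
| R_conj2: "prem (\<Sigma>, \<Gamma>, add_mset a2 \<Delta>) (\<Sigma>, \<Gamma>, add_mset (Conj a1 a2) \<Delta>)"
| L_conj: "prem (\<Sigma>, add_mset a1 (add_mset a2 \<Gamma>), \<Delta>) (\<Sigma>, add_mset (Conj a1 a2) \<Gamma>, \<Delta>)"
| R_disj: "prem (\<Sigma>, \<Gamma>, add_mset a1 (add_mset a2 \<Delta>)) (\<Sigma>, \<Gamma>, add_mset (Disj a1 a2) \<Delta>)"
| L_disj1: "prem (\<Sigma>, add_mset a1 \<Gamma>, \<Delta>) (\<Sigma>, add_mset (Disj a1 a2) \<Gamma>, \<Delta>)"
| L_disj2: "prem (\<Sigma>, add_mset a2 \<Gamma>, \<Delta>) (\<Sigma>, add_mset (Disj a1 a2) \<Gamma>, \<Delta>)"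
| R_imp: "prem (\<Sigma>, add_mset a1 \<Gamma>, add_mset a2 \<Delta>) (\<Sigma>, \<Gamma>, add_mset (Imp a1 a2) \<Delta>)"
| L_imp1: "prem (\<Sigma>, \<Gamma>, add_mset a1 \<Delta>) (\<Sigma>, add_mset (Imp a1 a2) \<Gamma>, \<Delta>)"
| L_imp2: "prem (\<Sigma>, add_mset a2 \<Gamma>, \<Delta>) (\<Sigma>, add_mset (Imp a1 a2) \<Gamma>, \<Delta>)"
| R_neg: "prem (\<Sigma>, add_mset a \<Gamma>, \<Delta>) (\<Sigma>, \<Gamma>, add_mset (Neg a) \<Delta>)"
| L_neg: "prem (\<Sigma>, \<Gamma>, add_mset a \<Delta>) (\<Sigma>, add_mset (Neg a) \<Gamma>, \<Delta>)"
| DK: "\<lbrakk> \<forall>(H, a)\<in>set bs. H \<subseteq> G;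
         \<forall>f\<in>#\<Sigma>. \<exists>H c. f = Box H c \<and> \<not> H \<subseteq> G;
         \<forall>f\<in>#\<Pi>. atom_or_bot f;
         \<forall>f\<in>#\<Omega>. atom_or_bot f \<or> boxed f \<rbrakk> \<Longrightarrow>
       prem ({#}, mset (map snd bs), {#b#})
            (\<Sigma> + mset (map (\<lambda>(H, a). Box H a) bs), \<Pi>, add_mset (Box G b) \<Omega>)"
| DT: "prem (add_mset (Box G a) \<Sigma>, add_mset a \<Gamma>, \<Delta>) (\<Sigma>, add_mset (Box G a) \<Gamma>, \<Delta>)"

end

theory Submission
  imports Defs
begin

(* Order T-sequents lexicographically by their height (the largest size of a formula in
   \<Sigma>, \<Gamma> or \<Delta>) and their weight (the total size of \<Gamma> and \<Delta>). A propositional rule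
   replaces a formula of \<Gamma>, \<Delta> by proper subformulas, and (D_T^+) moves D_G \<alpha> from \<Gamma>
   to \<Sigma> while adding \<alpha>: the height does not grow and the weight drops. The premise of
   (D_K^+) consists of the bodies of boxed formulas of the conclusion, so its height drops. *)

definition max_size :: "('p, 'ag) fm multiset \<Rightarrow> nat" where
  "max_size X = Max (insert 0 (size ` set_mset X))"

lemma max_size_le_iff: "max_size X \<le> n \<longleftrightarrow> (\<forall>x\<in>#X. size x \<le> n)"
  unfolding max_size_def by auto

lemma size_le_max_size: "x \<in># X \<Longrightarrow> size x \<le> max_size X"
  using max_size_le_iff by blast

lemma max_size_less:
  assumes "0 < n" and "\<And>x. x \<in># X \<Longrightarrow> size x < n"
  shows "max_size X < n"
  using assms max_size_le_iff[of X "n - 1"] by fastforce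

lemma size_le_max_size_add_mset: "size x \<le> size y \<Longrightarrow> size x \<le> max_size (add_mset y X)"
  using size_le_max_size[of y "add_mset y X"] by simp

lemma size_Box_le_max_size: "Suc (size a) \<le> max_size (add_mset (Box G a) X)"
  using size_le_max_size[of "Box G a" "add_mset (Box G a) X"] by simp

fun seq_height :: "('p, 'ag) tseq \<Rightarrow> nat" where
  "seq_height (\<Sigma>, \<Gamma>, \<Delta>) = max_size (\<Sigma> + \<Gamma> + \<Delta>)"

fun seq_weight :: "('p, 'ag) tseq \<Rightarrow> nat" where
  "seq_weight (\<Sigma>, \<Gamma>, \<Delta>) = (\<Sum>x\<in>#\<Gamma> + \<Delta>. size x)"

lemma prem_decreases_height_weight:
  "prem S' S \<Longrightarrow> (S', S) \<in> measures [seq_height, seq_weight]"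
proof (induction rule: prem.induct)
  case (DK bs G \<Sigma> \<Pi> \<Omega> b)
  let ?C = "\<Sigma> + mset (map (\<lambda>(H, a). Box H a) bs) + \<Pi> + add_mset (Box G b) \<Omega>"
  have "size x < max_size ?C" if "x \<in># mset (map snd bs) + {#b#}" for x
  proof -
    from that consider "x = b" | H where "(H, x) \<in> set bs" by auto
    then obtain H where "Box H x \<in># ?C"
    proof cases
      case 1
      then show ?thesis using that[of G] by simp
    next
      case (2 H)
      then have "Box H x \<in># mset (map (\<lambda>(H, a). Box H a) bs)"
        by (auto intro: rev_image_eqI)
      then show ?thesis using that[of H] by simp
    qed
    then show ?thesis using size_le_max_size[of "Box H x" ?C] by simp
  qed
  moreover have "0 < max_size ?C"
    using size_le_max_size[of "Box G b" ?C] by simp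
  ultimately have "max_size (mset (map snd bs) + {#b#}) < max_size ?C"
    by (intro max_size_less) auto
  then show ?case by (simp add: add.assoc)
qed (auto simp: max_size_le_iff simp flip: le_less
          intro: size_le_max_size size_le_max_size_add_mset size_Box_le_max_size)

lemma wf_prem: "wf {(S', S). prem S' S}"
  by (rule wf_subset[OF wf_measures]) (auto dest: prem_decreases_height_weight)

theorem proposition6p7:
  fixes S :: "nat \<Rightarrow> ('p::countable, 'ag::finite) tseq"
  shows "\<not> (\<forall>i. is_tseq (S i) \<and> prem (S (Suc i)) (S i))"
  using wf_prem unfolding wf_iff_no_infinite_down_chain by blast

end
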